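(* If $Q$ is a Jordan loop and $x\in Q$, then $x^3$, $x^4$ and $x^5$ are well-defined.
   Context: A loop is a set $Q$ with a binary operation (juxtaposition) and neutral element $e$ such that for all $a,b$ the equations $ax=b$, $ya=b$ have unique solutions. A Jordan loop is a commutative loop satisfying $x^2(yx)=(x^2y)x$. For $k\ge 0$, $x^k$ denotes the right-associated product $L_x^k(e)=x(x(\cdots(xe)\cdots))$ with $k$ factors $x$ (so $x^0=e$). We say $x^k$ is well-defined if every way of bracketing a product of $k$ copies of $x$ gives the same value. *)

theory Defs
  imports Main
begin

definition is_loop :: "('a \<Rightarrow> 'a \<Rightarrow> 'a) \<Rightarrow> 'a \<Rightarrow> bool" where
  "is_loop m e \<longleftrightarrow> (\<forall>x. m e x = x \<and> m x e = x)
     \<and> (\<forall>a b. \<exists>!x. m a x = b) \<and> (\<forall>a b. \<exists>!y. m y a = b)"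

definition jordan_loop :: "('a \<Rightarrow> 'a \<Rightarrow> 'a) \<Rightarrow> 'a \<Rightarrow> bool" where
  "jordan_loop m e \<longleftrightarrow> is_loop m e \<and> (\<forall>x y. m x y = m y x)
     \<and> (\<forall>x y. m (m x x) (m y x) = m (m (m x x) y) x)"

definition lpow :: "('a \<Rightarrow> 'a \<Rightarrow> 'a) \<Rightarrow> 'a \<Rightarrow> 'a \<Rightarrow> nat \<Rightarrow> 'a" where
  "lpow m e x k = (m x ^^ k) e"

text \<open>Bracketings of a product of copies of x: full binary trees.\<close>
datatype btree = Leaf | Node btree btree

fun leaves :: "btree \<Rightarrow> nat" where
  "leaves Leaf = 1"
| "leaves (Node l r) = leaves l + leaves r"

fun beval :: "('a \<Rightarrow> 'a \<Rightarrow> 'a) \<Rightarrow> 'a \<Rightarrow> btree \<Rightarrow> 'a" where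
  "beval m x Leaf = x"
| "beval m x (Node l r) = m (beval m x l) (beval m x r)"

definition pow_well_defined :: "('a \<Rightarrow> 'a \<Rightarrow> 'a) \<Rightarrow> 'a \<Rightarrow> 'a \<Rightarrow> nat \<Rightarrow> bool" where
  "pow_well_defined m e x k \<longleftrightarrow>
     (\<forall>t. leaves t = k \<longrightarrow> beval m x t = lpow m e x k)"

end

theory Submission
  imports Defs
begin

text \<open>In a commutative magma, products x^i x^j with i + j \<le> 5 are power-associative as soon as
  x^2 x^2 = x^4 and x^2 x^3 = x^5: every other split has a factor x, and commutativity lets it
  be absorbed from the left. Both identities are instances of the Jordan identity
  x^2(yx) = (x^2 y)x, with y = x and y = x^2 respectively.\<close>

lemma lpow_0 [simp]: "lpow m e x 0 = e"
  by (simp add: lpow_def)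

lemma lpow_Suc [simp]: "lpow m e x (Suc k) = m x (lpow m e x k)"
  by (simp add: lpow_def)

lemma leaves_pos: "0 < leaves t"
  by (induction t) auto

context
  fixes m :: "'a \<Rightarrow> 'a \<Rightarrow> 'a" and e x :: 'a
  assumes comm: "\<And>a b. m a b = m b a"
    and right_unit: "m x e = x"
    and jordan: "\<And>y. m (m x x) (m y x) = m (m (m x x) y) x"
begin

lemma lpow_mult_lpow_le_5:
  assumes "0 < i" "0 < j" "i + j \<le> 5"
  shows "m (lpow m e x i) (lpow m e x j) = lpow m e x (i + j)"
proof -
  have pow1: "lpow m e x 1 = x" by (simp add: right_unit)
  have pow2: "lpow m e x 2 = m x x" by (simp add: numeral_eq_Suc right_unit)
  have pow3: "lpow m e x 3 = m x (m x x)" by (simp add: numeral_eq_Suc right_unit)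
  have pow4: "lpow m e x 4 = m x (lpow m e x 3)" by (simp add: numeral_eq_Suc)
  have pow5: "lpow m e x 5 = m x (lpow m e x 4)" by (simp add: numeral_eq_Suc)
  have sq_sq: "m (m x x) (m x x) = lpow m e x 4"
    using jordan[of x] pow3 pow4 by (metis comm)
  have sq_cube: "m (m x x) (lpow m e x 3) = lpow m e x 5"
    using jordan[of "m x x"] sq_sq pow3 pow5 by (metis comm)
  consider "i = 1" | "j = 1" | "i = 2" "j = 2" | "i = 2" "j = 3" | "i = 3" "j = 2"
    using assms by linarith
  then show ?thesis
  proof cases
    case 1
    then show ?thesis using pow1 by simp
  next
    case 2
    then show ?thesis using pow1 comm by simp
  qed (use sq_sq sq_cube pow2 pow4 comm in simp_all)
qed

lemma beval_eq_lpow_le_5: "leaves t \<le> 5 \<Longrightarrow> beval m x t = lpow m e x (leaves t)"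
proof (induction t)
  case Leaf
  then show ?case by (simp add: right_unit)
next
  case (Node l r)
  then show ?case
    using leaves_pos[of l] leaves_pos[of r] lpow_mult_lpow_le_5 by simp
qed

end

theorem lemma2p1:
  fixes m :: "'a \<Rightarrow> 'a \<Rightarrow> 'a" and e x :: 'a
  assumes "jordan_loop m e"
  shows "pow_well_defined m e x 3 \<and> pow_well_defined m e x 4 \<and> pow_well_defined m e x 5"
proof -
  have comm: "\<And>a b. m a b = m b a" and right_unit: "m x e = x"
    and jordan: "\<And>y. m (m x x) (m y x) = m (m (m x x) y) x"
    using assms unfolding jordan_loop_def is_loop_def by blast+
  show ?thesis
    using beval_eq_lpow_le_5[OF comm right_unit jordan]
    unfolding pow_well_defined_def by simp
qed

end
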